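(* Let $w\in\{a,b\}^*$, $|w|=n>1$, be conjugate to a Christoffel word, and let $p=|w|_a$ (so $\gcd(p,n)=1$). Fix $1\le k\le m<n$ and an ordered partition $P_k=(p_1,\dots,p_k)$ of $m$. Let $s_0=0$, $s_\ell=p_1+\dots+p_\ell$ for $1\le\ell\le k$, and let $i_\ell$ be the least nonnegative residue of $s_\ell p$ modulo $n$. These $k+1$ residues are distinct; list them in increasing order as $0=r_0<r_1<\dots<r_k$, set $r_{k+1}=n$, and let $\pi_\ell=r_{\ell+1}-r_\ell$ for $0\le\ell\le k$, so that $\Pi=(\pi_0,\dots,\pi_k)$ is an ordered partition of $n$ into $k+1$ parts. Order the $k+1$ varieties of $\mathcal{F}_{(m,k)}$ as $\lambda_0,\dots,\lambda_k$ according to the lexicographic order of their elements (the lexicographically least element of $\lambda_{\ell}$ precedes that of $\lambda_{\ell+1}$). Then the multiplicity of $\lambda_\ell$ is $\pi_\ell$ for each $0\le\ell\le k$. (For example, for $w=aaabaab$ and $P_3=(1,2,1)$, $\Pi=(1,4,1,1)$.)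
   Context: Alphabet $\{a<b\}$ with lexicographic order. $|u|_x$ denotes the number of occurrences of the letter $x$ in $u$. For $|w|=n$ and $1\le m<n$, the multiset $\mathcal{F}_m$ of circular factors of length $m$ of $w$ is the multiset of the length-$m$ prefixes of the $n$ rotations of $w$ (equivalently, the $n$ factors of length $m$ of the prefix of length $n+m-1$ of $ww$, counted with starting positions). Given an ordered partition $P_k=(p_1,\dots,p_k)$ of $m$ (positive integers summing to $m$), $\mathcal{F}_{(m,k)}$ is the multiset of the $u\in\mathcal{F}_m$ written as $u=u_1\cdots u_k$ with $|u_i|=p_i$. The height profile of $u$ is $\langle |u_1|_b,\dots,|u_k|_b\rangle$; partitioned factors of equal height profile are of the same variety; the multiplicity of a variety is the number of elements of the multiset $\mathcal{F}_{(m,k)}$ in it. A lower Christoffel word of slope $q/p$ with $p,q\ge1$, $\gcd(p,q)=1$, $n=p+q$, is $w_0\cdots w_{n-1}$ where $w_i=a$ if $((i+1)q\bmod n)>(iq\bmod n)$ and $w_i=b$ otherwise; a Christoffel word (of length $>1$) is a lower Christoffel word or its reversal; conjugate means rotation. It is known (Theorem card) that $\mathcal{F}_{(m,k)}$ has exactly $k+1$ varieties, each forming a block of lexicographically consecutive elements. *)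

theory Defs
  imports Main "HOL-Library.Multiset"
begin

datatype letter = A | B

definition occ :: "letter \<Rightarrow> letter list \<Rightarrow> nat" where
  "occ x u = length (filter (\<lambda>y. y = x) u)"

text \<open>Strict lexicographic order (used on words of equal length).\<close>
definition lexless :: "letter list \<Rightarrow> letter list \<Rightarrow> bool" where
  "lexless u v \<longleftrightarrow> (\<exists>i. i < length u \<and> i < length v \<and> take i u = take i v
        \<and> u ! i = A \<and> v ! i = B)"

text \<open>Lower Christoffel word of slope q/p, n = p + q.\<close>
definition lower_christoffel :: "nat \<Rightarrow> nat \<Rightarrow> letter list" where
  "lower_christoffel p q = (let n = p + q in
     map (\<lambda>i. if (i + 1) * q mod n > i * q mod n then A else B) [0..<n])"

definition christoffel :: "letter list \<Rightarrow> bool" where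
  "christoffel w \<longleftrightarrow> (\<exists>p q. p \<ge> 1 \<and> q \<ge> 1 \<and> coprime p q \<and>
      (w = lower_christoffel p q \<or> w = rev (lower_christoffel p q)))"

definition conjugate :: "letter list \<Rightarrow> letter list \<Rightarrow> bool" where
  "conjugate u v \<longleftrightarrow> (\<exists>i. v = rotate i u)"

definition circ_factors :: "letter list \<Rightarrow> nat \<Rightarrow> letter list multiset" where
  "circ_factors w m = mset (map (\<lambda>i. take m (rotate i w)) [0..<length w])"

definition psum :: "nat list \<Rightarrow> nat \<Rightarrow> nat" where
  "psum P l = sum_list (take l P)"

definition height_profile :: "nat list \<Rightarrow> letter list \<Rightarrow> nat list" where
  "height_profile P u =
     map (\<lambda>l. occ B (take (P ! l) (drop (psum P l) u))) [0..<length P]"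

definition part_factors :: "letter list \<Rightarrow> nat list \<Rightarrow> letter list multiset" where
  "part_factors w P = circ_factors w (sum_list P)"

text \<open>Height profiles occurring (the varieties, identified by their profile).\<close>
definition varieties :: "letter list \<Rightarrow> nat list \<Rightarrow> nat list set" where
  "varieties w P = height_profile P ` set_mset (part_factors w P)"

definition variety_elems :: "letter list \<Rightarrow> nat list \<Rightarrow> nat list \<Rightarrow> letter list set" where
  "variety_elems w P h = {u \<in> set_mset (part_factors w P). height_profile P u = h}"

definition multiplicity :: "letter list \<Rightarrow> nat list \<Rightarrow> nat list \<Rightarrow> nat" where
  "multiplicity w P h = size (filter_mset (\<lambda>u. height_profile P u = h) (part_factors w P))"

definition variety_min :: "letter list \<Rightarrow> nat list \<Rightarrow> nat list \<Rightarrow> letter list" where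
  "variety_min w P h = (THE u. u \<in> variety_elems w P h \<and>
       (\<forall>v \<in> variety_elems w P h. v \<noteq> u \<longrightarrow> lexless u v))"

definition variety_rank :: "letter list \<Rightarrow> nat list \<Rightarrow> nat list \<Rightarrow> nat" where
  "variety_rank w P h = card {h' \<in> varieties w P. lexless (variety_min w P h') (variety_min w P h)}"

definition residues :: "letter list \<Rightarrow> nat list \<Rightarrow> nat set" where
  "residues w P = (\<lambda>l. (psum P l * occ A w) mod length w) ` {0..length P}"

definition rseq :: "letter list \<Rightarrow> nat list \<Rightarrow> nat list" where
  "rseq w P = sorted_list_of_set (residues w P) @ [length w]"

definition pi_part :: "letter list \<Rightarrow> nat list \<Rightarrow> nat \<Rightarrow> nat" where
  "pi_part w P l = rseq w P ! (l + 1) - rseq w P ! l"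

end

theory Submission
  imports Defs
begin

text \<open>
  A conjugate of a Christoffel word with p letters a is the coding of an orbit of the rotation
  v \<mapsto> v + p on Z/nZ, the letter a being read exactly when the next step wraps around n.
  In the circular factor starting at the orbit point z, the l-th block therefore contains
  p_l minus (number of wraps inside the block) letters b, and the number of wraps before
  position s_l exceeds \<lfloor>s_l p / n\<rfloor> by one exactly when z + i_l \<ge> n.
  So two factors have the same height profile iff they have equally many residues i_l below
  n - z, and the varieties are the sets of starting points z \<in> [n - r_{l+1}, n - r_l), of
  size \<pi>_l. The number of a's in a prefix of length t is \<lfloor>(z + t p) / n\<rfloor>,
  which grows with z; hence larger starting points give lexicographically smaller factors, and
  the interval of index l is the variety of rank l.
\<close>

lemma occ_append [simp]: "occ x (u @ v) = occ x u + occ x v"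
  by (simp add: occ_def)

lemma occ_A_add_occ_B: "occ A u + occ B u = length u"
  unfolding occ_def by (induction u) (use letter.exhaust in auto)

lemma lexless_asym: "lexless u v \<Longrightarrow> \<not> lexless v u"
  unfolding lexless_def by (metis nth_take letter.distinct(1) linorder_neqE_nat)

lemma variety_min_eqI:
  assumes "u \<in> variety_elems w P h" "\<forall>v \<in> variety_elems w P h. v \<noteq> u \<longrightarrow> lexless u v"
  shows "variety_min w P h = u"
  unfolding variety_min_def
proof (rule the_equality)
  show "u \<in> variety_elems w P h \<and> (\<forall>v \<in> variety_elems w P h. v \<noteq> u \<longrightarrow> lexless u v)"
    using assms by (rule conjI)
  fix u'
  assume u': "u' \<in> variety_elems w P h \<and> (\<forall>v \<in> variety_elems w P h. v \<noteq> u' \<longrightarrow> lexless u' v)"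
  show "u' = u"
  proof (rule ccontr)
    assume "u' \<noteq> u"
    then have "lexless u' u" "lexless u u'"
      using u' assms by auto
    then show False
      using lexless_asym by blast
  qed
qed

lemma first_difference:
  "length u = length v \<Longrightarrow> u \<noteq> v \<Longrightarrow>
     \<exists>i < length u. take i u = take i v \<and> u ! i \<noteq> v ! i"
proof (induction u arbitrary: v)
  case Nil
  then show ?case by simp
next
  case (Cons x u)
  then obtain y v' where v: "v = y # v'"
    by (cases v) auto
  show ?case
  proof (cases "x = y")
    case True
    with Cons v obtain i where "i < length u" "take i u = take i v'" "u ! i \<noteq> v' ! i"
      by auto
    with True v show ?thesis
      by (intro exI[of _ "Suc i"]) auto
  qed (use v in auto)
qed

lemma add_div_wrap:
  fixes y p n :: nat
  assumes "p < n"
  shows "(y + p) div n = y div n + (if y mod n < n - p then 0 else 1)"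
proof -
  have "(r + p) div n = (if r < n - p then 0 else 1)" if "r < n" for r
    using assms that by (auto simp: div_eq_0_iff le_div_geq)
  then have "(y mod n + p) div n = (if y mod n < n - p then 0 else 1)"
    using assms by simp
  then show ?thesis
    using assms by (simp add: div_add1_eq[of y p n])
qed

lemma add_mod_cases:
  fixes a b n :: nat
  assumes "a < n" "b < n"
  shows "a + b = (a + b) mod n \<or> a + b = (a + b) mod n + n"
  using assms by (cases "a + b < n") (auto simp: le_mod_geq)

lemma add_div_eq_iff:
  fixes z z' s n :: nat
  assumes "z < n" "z' < n"
  shows "(z + s) div n = (z' + s) div n \<longleftrightarrow> (z + s mod n < n \<longleftrightarrow> z' + s mod n < n)"
  using add_div_wrap[of z n s] add_div_wrap[of z' n s] assms by (auto simp: add.commute)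

lemma inj_on_rotation:
  fixes p n x :: nat
  assumes "coprime p n"
  shows "inj_on (\<lambda>t. (x + t * p) mod n) {..<n}"
proof -
  have "a = b" if "a \<le> b" "b < n" "(x + a * p) mod n = (x + b * p) mod n" for a b
  proof -
    have "n dvd (b - a) * p"
      using mod_eq_dvd_iff_nat[of "x + a * p" "x + b * p" n] that by (simp add: diff_mult_distrib)
    then have "n dvd b - a"
      using assms by (simp add: coprime_commute coprime_dvd_mult_left_iff)
    then show "a = b"
      using that nat_dvd_not_less[of "b - a" n] by (cases "a < b") auto
  qed
  then show ?thesis
    by (intro inj_onI) (metis lessThan_iff nat_le_linear)
qed

text \<open>
  rotation_word n p x a b codes the points (x + t p) mod n, a \<le> t < b, of an orbit of the
  rotation by p: the letter A is read on [n - p, n), i.e. exactly when the next step wraps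
  around n.
\<close>

definition rotation_letter :: "nat \<Rightarrow> nat \<Rightarrow> nat \<Rightarrow> letter" where
  "rotation_letter n p v = (if v < n - p then B else A)"

definition rotation_word :: "nat \<Rightarrow> nat \<Rightarrow> nat \<Rightarrow> nat \<Rightarrow> nat \<Rightarrow> letter list" where
  "rotation_word n p x a b = map (\<lambda>t. rotation_letter n p ((x + t * p) mod n)) [a..<b]"

lemma length_rotation_word [simp]: "length (rotation_word n p x a b) = b - a"
  by (simp add: rotation_word_def)

lemma nth_rotation_word:
  "i < b - a \<Longrightarrow> rotation_word n p x a b ! i = rotation_letter n p ((x + (a + i) * p) mod n)"
  by (simp add: rotation_word_def)

lemma take_drop_rotation_word:
  "a + d + t \<le> b \<Longrightarrow> take t (drop d (rotation_word n p x a b)) = rotation_word n p x (a + d) (a + d + t)"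
  by (simp add: rotation_word_def take_map drop_map)

lemma occ_A_rotation_word:
  assumes "p < n" "a \<le> b"
  shows "occ A (rotation_word n p x a b) + (x + a * p) div n = (x + b * p) div n"
  using assms(2)
proof (induction b rule: dec_induct)
  case base
  then show ?case
    by (simp add: rotation_word_def occ_def)
next
  case (step b)
  have "(x + Suc b * p) div n = (x + b * p) div n + (if (x + b * p) mod n < n - p then 0 else 1)"
    using add_div_wrap[OF assms(1), of "x + b * p"] by (simp add: ac_simps)
  moreover have "rotation_word n p x a (Suc b)
      = rotation_word n p x a b @ [rotation_letter n p ((x + b * p) mod n)]"
    using step.hyps by (simp add: rotation_word_def)
  ultimately show ?case
    using step.IH by (simp add: rotation_letter_def occ_def)
qed

lemma rotate_rotation_word:
  assumes "0 < n"
  shows "rotate j (rotation_word n p x 0 n) = rotation_word n p ((x + j * p) mod n) 0 n"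
proof (rule nth_equalityI)
  fix i
  assume "i < length (rotate j (rotation_word n p x 0 n))"
  then have i: "i < n"
    by simp
  have "(x + (j + i) mod n * p) mod n = (x + (j + i) * p) mod n"
    by (metis mod_add_right_eq mod_mult_left_eq)
  also have "\<dots> = ((x + j * p) mod n + i * p) mod n"
    by (simp add: mod_simps algebra_simps)
  finally have "(x + (j + i) mod n * p) mod n = ((x + j * p) mod n + i * p) mod n" .
  with i assms show "rotate j (rotation_word n p x 0 n) ! i = rotation_word n p ((x + j * p) mod n) 0 n ! i"
    by (simp add: nth_rotate nth_rotation_word)
qed simp

lemma lower_christoffel_eq_rotation_word:
  assumes "1 \<le> p" "1 \<le> q"
  shows "lower_christoffel p q = rotation_word (p + q) p (p + q - 1) 0 (p + q)"
proof (rule nth_equalityI)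
  let ?n = "p + q"
  fix i
  assume "i < length (lower_christoffel p q)"
  then have i: "i < ?n"
    by (simp add: lower_christoffel_def Let_def)
  define y where "y = i * q mod ?n"
  define v where "v = (?n - 1 + i * p) mod ?n"
  have bounds: "y < ?n" "v < ?n"
    using assms by (simp_all add: y_def v_def)
  have "(i + 1) * q mod ?n = (y + q) mod ?n"
    by (simp add: y_def mod_simps algebra_simps)
  then have step: "(i + 1) * q mod ?n > y \<longleftrightarrow> y < p"
    using bounds assms by (cases "y + q < ?n") (auto simp: le_mod_geq)
  \<comment> \<open>position i is read at the orbit point v = n - 1 - y\<close>
  have "(v + y) mod ?n = (?n - 1 + i * p + i * q) mod ?n"
    by (simp add: v_def y_def mod_add_eq)
  also have "?n - 1 + i * p + i * q = ?n - 1 + i * ?n"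
    by (simp add: algebra_simps)
  also have "(?n - 1 + i * ?n) mod ?n = ?n - 1"
    using assms by (simp only: mod_mult_self1) simp
  finally have "v + y = ?n - 1"
    using add_mod_cases[OF bounds(2,1)] bounds by linarith
  moreover have "rotation_word ?n p (?n - 1) 0 ?n ! i = rotation_letter ?n p v"
    using i by (simp add: nth_rotation_word v_def)
  ultimately have "rotation_word ?n p (?n - 1) 0 ?n ! i = (if y < p then A else B)"
    using assms by (auto simp: rotation_letter_def)
  moreover have "lower_christoffel p q ! i = (if y < p then A else B)"
    using i step by (simp add: lower_christoffel_def Let_def y_def del: upt_Suc)
  ultimately show "lower_christoffel p q ! i = rotation_word ?n p (?n - 1) 0 ?n ! i"
    by simp
qed (simp add: lower_christoffel_def Let_def)

lemma rev_lower_christoffel_eq_rotation_word: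
  assumes "1 \<le> p" "1 \<le> q"
  shows "rev (lower_christoffel p q) = rotation_word (p + q) p 0 0 (p + q)"
proof (rule nth_equalityI)
  let ?n = "p + q"
  have length: "length (lower_christoffel p q) = ?n"
    by (simp add: lower_christoffel_def Let_def)
  then show "length (rev (lower_christoffel p q)) = length (rotation_word ?n p 0 0 ?n)"
    by simp
  fix i
  assume "i < length (rev (lower_christoffel p q))"
  then have i: "i < ?n"
    using length by simp
  define v where "v = (?n - 1 + (?n - 1 - i) * p) mod ?n"
  define u where "u = i * p mod ?n"
  have bounds: "v < ?n" "u < ?n"
    using assms by (simp_all add: v_def u_def)
  have "(v + u) mod ?n = (?n - 1 + (?n - 1 - i) * p + i * p) mod ?n"
    by (simp add: v_def u_def mod_add_eq)
  also have "?n - 1 + (?n - 1 - i) * p + i * p = ?n - 1 + (?n - 1) * p"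
  proof -
    have "?n - 1 - i + i = ?n - 1"
      using i by simp
    then show ?thesis
      by (metis add.assoc add_mult_distrib)
  qed
  also have "\<dots> = (q - 1) + p * ?n"
  proof -
    obtain a b where "p = Suc a" "q = Suc b"
      using assms by (metis Suc_le_D One_nat_def)
    then show ?thesis
      by (simp add: algebra_simps)
  qed
  also have "((q - 1) + p * ?n) mod ?n = q - 1"
    using assms by (simp only: mod_mult_self1) simp
  finally have "v < q \<longleftrightarrow> u < q"
    using add_mod_cases[OF bounds] bounds by linarith
  moreover have "rev (lower_christoffel p q) ! i = rotation_letter ?n p v"
    using i assms length lower_christoffel_eq_rotation_word[OF assms]
    by (simp add: rev_nth nth_rotation_word v_def)
  moreover have "rotation_word ?n p 0 0 ?n ! i = rotation_letter ?n p u"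
    using i by (simp add: nth_rotation_word u_def)
  ultimately show "rev (lower_christoffel p q) ! i = rotation_word ?n p 0 0 ?n ! i"
    by (simp add: rotation_letter_def)
qed

lemma conjugate_christoffel_eq_rotation_word:
  assumes "christoffel c" "conjugate c w"
  obtains p x where "p < length w" "coprime p (length w)" "x < length w"
    "w = rotation_word (length w) p x 0 (length w)"
proof -
  obtain p q where pq: "1 \<le> p" "1 \<le> q" "coprime p q"
    and c: "c = lower_christoffel p q \<or> c = rev (lower_christoffel p q)"
    using assms(1) unfolding christoffel_def by blast
  let ?n = "p + q"
  obtain x where x: "x < ?n" "c = rotation_word ?n p x 0 ?n"
  proof (cases "c = lower_christoffel p q")
    case True
    then show ?thesis
      using that[of "?n - 1"] lower_christoffel_eq_rotation_word[OF pq(1,2)] pq(1) by simp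
  next
    case False
    then show ?thesis
      using that[of 0] c rev_lower_christoffel_eq_rotation_word[OF pq(1,2)] pq(1) by simp
  qed
  obtain j where "w = rotate j c"
    using assms(2) unfolding conjugate_def by blast
  with x pq have "w = rotation_word ?n p ((x + j * p) mod ?n) 0 ?n"
    by (simp add: rotate_rotation_word)
  moreover have "coprime p ?n"
    using pq(3) by (simp add: coprime_iff_gcd_eq_1)
  ultimately show ?thesis
    using that[of p "(x + j * p) mod ?n"] pq(1,2) by simp
qed

lemma strict_sorted_less_nth_eq_set_take:
  fixes xs :: "'a::linorder list"
  assumes sorted: "sorted_wrt (<) xs" and i: "i < length xs"
  shows "{x \<in> set xs. x < xs ! i} = set (take i xs)"
proof (intro set_eqI iffI)
  fix x
  assume "x \<in> {x \<in> set xs. x < xs ! i}"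
  then obtain j where "j < length xs" "x = xs ! j" "xs ! j < xs ! i"
    by (auto simp: in_set_conv_nth)
  moreover from this have "j < i"
    using sorted_wrt_nth_less[OF sorted, of i j] i by (metis less_asym less_irrefl linorder_neqE_nat)
  ultimately show "x \<in> set (take i xs)"
    by (auto simp: in_set_conv_nth intro!: exI[of _ j])
next
  fix x
  assume "x \<in> set (take i xs)"
  then obtain j where "j < i" "x = xs ! j"
    using i by (auto simp: in_set_conv_nth)
  then show "x \<in> {x \<in> set xs. x < xs ! i}"
    using sorted_wrt_nth_less[OF sorted] i by auto
qed

lemma card_less_le_iff_strict_sorted:
  fixes xs :: "'a::linorder list"
  assumes sorted: "sorted_wrt (<) xs" and i: "i < length xs"
  shows "card {x \<in> set xs. x < t} \<le> i \<longleftrightarrow> t \<le> xs ! i"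
proof -
  note below = strict_sorted_less_nth_eq_set_take[OF assms]
  have card_below: "card (set (take i xs)) = i"
    using sorted i by (simp add: strict_sorted_iff distinct_card)
  show ?thesis
  proof
    assume "card {x \<in> set xs. x < t} \<le> i"
    show "t \<le> xs ! i"
    proof (rule ccontr)
      assume "\<not> t \<le> xs ! i"
      then have "insert (xs ! i) (set (take i xs)) \<subseteq> {x \<in> set xs. x < t}"
        unfolding below[symmetric] using i by auto
      moreover have "xs ! i \<notin> set (take i xs)"
        unfolding below[symmetric] by simp
      then have "card (insert (xs ! i) (set (take i xs))) = Suc i"
        by (simp add: card_below)
      ultimately have "Suc i \<le> card {x \<in> set xs. x < t}"
        using card_mono[of "{x \<in> set xs. x < t}" "insert (xs ! i) (set (take i xs))"] by simp
      with \<open>card {x \<in> set xs. x < t} \<le> i\<close> show False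
        by simp
    qed
  next
    assume "t \<le> xs ! i"
    then have "card {x \<in> set xs. x < t} \<le> card {x \<in> set xs. x < xs ! i}"
      by (intro card_mono) auto
    then show "card {x \<in> set xs. x < t} \<le> i"
      by (simp add: below card_below)
  qed
qed

lemma psum_0 [simp]: "psum P 0 = 0"
  by (simp add: psum_def)

lemma psum_Suc: "l < length P \<Longrightarrow> psum P (Suc l) = psum P l + P ! l"
  by (simp add: psum_def take_Suc_conv_app_nth)

lemma psum_le_sum_list: "psum P l \<le> sum_list P"
proof -
  have "sum_list P = sum_list (take l P) + sum_list (drop l P)"
    by (simp flip: sum_list_append)
  then show ?thesis
    by (simp add: psum_def)
qed

lemma psum_strict_mono:
  assumes pos: "\<forall>x \<in> set P. 0 < x" and "l < l'" "l' \<le> length P"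
  shows "psum P l < psum P l'"
proof -
  have "Suc l \<le> l'"
    using assms(2) by simp
  then show ?thesis
    using assms(3)
  proof (induction l' rule: dec_induct)
    case base
    then show ?case
      using pos by (simp add: psum_Suc)
  next
    case (step l')
    then show ?case
      by (simp add: psum_Suc)
  qed
qed

locale partitioned_rotation =
  fixes n p :: nat and P :: "nat list" and k m :: nat
  assumes p_less_n: "p < n" and coprime_p_n: "coprime p n"
    and parts_pos: "\<forall>x \<in> set P. 0 < x"
    and length_P: "length P = k" and sum_P: "sum_list P = m" and m_less_n: "m < n"
begin

text \<open>
  factor z is the circular factor starting at the orbit point z, and cut_residues is the set
  of residues i_l of the statement. The variety of rank l will be the set of factors of
  level l + 1.
\<close>

definition factor :: "nat \<Rightarrow> letter list" where
  "factor z = rotation_word n p z 0 m"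

abbreviation profile :: "nat \<Rightarrow> nat list" where
  "profile z \<equiv> height_profile P (factor z)"

definition cut_residues :: "nat set" where
  "cut_residues = (\<lambda>l. psum P l * p mod n) ` {0..k}"

definition residues_below :: "nat \<Rightarrow> nat set" where
  "residues_below z = {r \<in> cut_residues. z + r < n}"

definition level :: "nat \<Rightarrow> nat" where
  "level z = card (residues_below z)"

lemma psum_less_n: "l \<le> k \<Longrightarrow> psum P l < n"
  using psum_le_sum_list[of P l] sum_P m_less_n by simp

lemma card_cut_residues: "card cut_residues = Suc k"
proof -
  have "inj_on (psum P) {0..k}"
    using psum_strict_mono[OF parts_pos] length_P
    by (intro strict_mono_on_imp_inj_on) (auto simp: strict_mono_on_def)
  moreover have "inj_on (\<lambda>t. (0 + t * p) mod n) (psum P ` {0..k})"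
    by (intro inj_on_subset[OF inj_on_rotation[OF coprime_p_n]]) (auto intro: psum_less_n)
  ultimately have "inj_on (\<lambda>l. psum P l * p mod n) {0..k}"
    using comp_inj_on by (auto simp: comp_def)
  then show ?thesis
    by (simp add: cut_residues_def card_image)
qed

lemma finite_cut_residues [simp]: "finite cut_residues"
  by (simp add: cut_residues_def)

lemma nth_sorted_cut_residues: "i \<le> k \<Longrightarrow> sorted_list_of_set cut_residues ! i \<in> cut_residues"
  using card_cut_residues by (metis nth_mem length_sorted_list_of_set set_sorted_list_of_set
      finite_cut_residues less_Suc_eq_le)

lemma cut_residues_less_n: "r \<in> cut_residues \<Longrightarrow> r < n"
  using p_less_n by (auto simp: cut_residues_def)

lemma zero_in_cut_residues: "0 \<in> cut_residues"
  unfolding cut_residues_def by (rule image_eqI[of _ _ 0]) simp_all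

lemma length_profile [simp]: "length (profile z) = k"
  by (simp add: height_profile_def length_P)

lemma nth_profile:
  assumes "l < k"
  shows "profile z ! l + (z + psum P (Suc l) * p) div n = P ! l + (z + psum P l * p) div n"
proof -
  define block where "block = rotation_word n p z (psum P l) (psum P (Suc l))"
  have "psum P (Suc l) \<le> m"
    using psum_le_sum_list sum_P by metis
  then have "profile z ! l = occ B block"
    using assms length_P
    by (simp add: height_profile_def factor_def block_def psum_Suc take_drop_rotation_word)
  moreover have "occ A block + occ B block = P ! l"
    using assms length_P by (simp add: occ_A_add_occ_B block_def psum_Suc)
  moreover have "occ A block + (z + psum P l * p) div n = (z + psum P (Suc l) * p) div n"
    using assms length_P occ_A_rotation_word[OF p_less_n] by (simp add: block_def psum_Suc)
  ultimately show ?thesis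
    by linarith
qed

lemma profile_eq_iff_carries:
  assumes "z < n" "z' < n"
  shows "profile z = profile z' \<longleftrightarrow>
    (\<forall>l \<le> k. (z + psum P l * p) div n = (z' + psum P l * p) div n)"
proof
  assume eq: "profile z = profile z'"
  show "\<forall>l \<le> k. (z + psum P l * p) div n = (z' + psum P l * p) div n"
  proof (intro allI impI)
    fix l
    show "l \<le> k \<Longrightarrow> (z + psum P l * p) div n = (z' + psum P l * p) div n"
    proof (induction l)
      case 0
      then show ?case
        using assms by simp
    next
      case (Suc l)
      then show ?case
        using nth_profile[of l z] nth_profile[of l z'] eq by simp
    qed
  qed
next
  assume carries: "\<forall>l \<le> k. (z + psum P l * p) div n = (z' + psum P l * p) div n"
  show "profile z = profile z'"
  proof (rule nth_equalityI)
    fix l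
    assume "l < length (profile z)"
    then have "l < k"
      by simp
    with carries have "(z + psum P l * p) div n = (z' + psum P l * p) div n"
      and "(z + psum P (Suc l) * p) div n = (z' + psum P (Suc l) * p) div n"
      by simp_all
    with nth_profile[OF \<open>l < k\<close>, of z] nth_profile[OF \<open>l < k\<close>, of z']
    show "profile z ! l = profile z' ! l"
      by linarith
  qed simp
qed

lemma profile_eq_iff_residues_below:
  assumes "z < n" "z' < n"
  shows "profile z = profile z' \<longleftrightarrow> residues_below z = residues_below z'"
  unfolding profile_eq_iff_carries[OF assms] add_div_eq_iff[OF assms] residues_below_def
    cut_residues_def by auto

lemma finite_residues_below [simp]: "finite (residues_below z)"
  by (simp add: residues_below_def cut_residues_def)

lemma residues_below_antimono: "z \<le> z' \<Longrightarrow> residues_below z' \<subseteq> residues_below z"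
  by (auto simp: residues_below_def)

lemma level_antimono: "z \<le> z' \<Longrightarrow> level z' \<le> level z"
  unfolding level_def using residues_below_antimono by (simp add: card_mono)

lemma profile_eq_iff_level:
  assumes "z < n" "z' < n"
  shows "profile z = profile z' \<longleftrightarrow> level z = level z'"
proof -
  have "residues_below z = residues_below z'" if "level z = level z'"
  proof (cases "z \<le> z'")
    case True
    then show ?thesis
      using card_subset_eq[OF _ residues_below_antimono, of z z'] that by (simp add: level_def)
  next
    case False
    then show ?thesis
      using card_subset_eq[OF _ residues_below_antimono, of z' z] that by (simp add: level_def)
  qed
  then show ?thesis
    using profile_eq_iff_residues_below[OF assms] by (auto simp: level_def)
qed

lemma occ_A_take_factor: "z < n \<Longrightarrow> t \<le> m \<Longrightarrow> occ A (take t (factor z)) = (z + t * p) div n"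
  using occ_A_rotation_word[OF p_less_n, of 0 t z] take_drop_rotation_word[of 0 0 t m n p z]
  by (simp add: factor_def)

lemma lexless_factor:
  assumes "y < z" "z < n" "factor z \<noteq> factor y"
  shows "lexless (factor z) (factor y)"
proof -
  obtain i where i: "i < m" "take i (factor z) = take i (factor y)" "factor z ! i \<noteq> factor y ! i"
    using first_difference[of "factor z" "factor y"] assms(3) by (auto simp: factor_def)
  \<comment> \<open>the A-count of the prefix of length t is (z + t p) div n, monotone in z\<close>
  have "occ A (take (Suc i) (factor y)) \<le> occ A (take (Suc i) (factor z))"
    using assms(1,2) i(1) by (simp add: occ_A_take_factor div_le_mono)
  then have "occ A [factor y ! i] \<le> occ A [factor z ! i]"
    using i(1,2) by (simp add: take_Suc_conv_app_nth factor_def)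
  then have "factor z ! i = A" "factor y ! i = B"
    using i(3) by (cases "factor z ! i"; cases "factor y ! i"; simp add: occ_def)+
  then show ?thesis
    using i(1,2) unfolding lexless_def by (auto simp: factor_def)
qed

definition thresholds :: "nat list" where
  "thresholds = sorted_list_of_set cut_residues @ [n]"

lemma level_le_iff:
  assumes "z < n" "i \<le> k"
  shows "level z \<le> i \<longleftrightarrow> n \<le> z + thresholds ! i"
proof -
  let ?rs = "sorted_list_of_set cut_residues"
  have "level z = card {r \<in> set ?rs. r < n - z}"
    unfolding level_def residues_below_def by (simp add: cut_residues_def less_diff_conv add.commute)
  also have "\<dots> \<le> i \<longleftrightarrow> n - z \<le> ?rs ! i"
    using assms(2) card_cut_residues by (intro card_less_le_iff_strict_sorted) auto
  also have "\<dots> \<longleftrightarrow> n \<le> z + ?rs ! i"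
    using assms(1) by arith
  finally show ?thesis
    using assms(2) card_cut_residues by (simp add: thresholds_def nth_append)
qed

lemma level_le_Suc_k: "level z \<le> Suc k"
  unfolding level_def card_cut_residues[symmetric]
  by (rule card_mono) (auto simp: residues_below_def cut_residues_def)

lemma level_pos:
  assumes "z < n"
  shows "0 < level z"
proof -
  have "0 \<in> residues_below z"
    using assms zero_in_cut_residues by (simp add: residues_below_def)
  then show ?thesis
    by (auto simp: level_def card_gt_0_iff)
qed

lemma card_level_le:
  assumes "i \<le> Suc k"
  shows "card {z. z < n \<and> level z \<le> i} = thresholds ! i"
proof (cases "i = Suc k")
  case True
  then have "{z. z < n \<and> level z \<le> i} = {..<n}"
    using level_le_Suc_k by auto
  with True card_cut_residues show ?thesis
    by (simp add: thresholds_def nth_append)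
next
  case False
  then have "thresholds ! i \<in> cut_residues"
    using assms card_cut_residues nth_sorted_cut_residues by (simp add: thresholds_def nth_append)
  with False assms have "{z. z < n \<and> level z \<le> i} = {n - thresholds ! i..<n}"
    using level_le_iff cut_residues_less_n by force
  then show ?thesis
    using cut_residues_less_n[OF \<open>thresholds ! i \<in> cut_residues\<close>] by simp
qed

lemma thresholds_strict_mono: "l \<le> k \<Longrightarrow> thresholds ! l < thresholds ! Suc l"
  using card_cut_residues cut_residues_less_n nth_sorted_cut_residues[of k]
    sorted_wrt_nth_less[OF strict_sorted_list_of_set[of cut_residues], of l "Suc l"]
  by (cases "l = k") (auto simp: thresholds_def nth_append)

lemma card_level_eq:
  assumes "l \<le> k"
  shows "card {z. z < n \<and> level z = Suc l} = thresholds ! Suc l - thresholds ! l"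
proof -
  have "{z. z < n \<and> level z = Suc l} = {z. z < n \<and> level z \<le> Suc l} - {z. z < n \<and> level z \<le> l}"
    by auto
  then show ?thesis
    using assms by (simp add: card_Diff_subset card_level_le Collect_mono_iff)
qed

definition rep :: "nat \<Rightarrow> nat" where
  "rep l = Max {z. z < n \<and> level z = Suc l}"

lemma rep_greatest:
  assumes "l \<le> k"
  shows "rep l < n" "level (rep l) = Suc l" "z < n \<Longrightarrow> level z = Suc l \<Longrightarrow> z \<le> rep l"
proof -
  have "{z. z < n \<and> level z = Suc l} \<noteq> {}"
    using card_level_eq[OF assms] thresholds_strict_mono[OF assms] by (metis card.empty zero_less_diff less_irrefl)
  then have "rep l \<in> {z. z < n \<and> level z = Suc l}"
    unfolding rep_def by (intro Max_in) auto
  then show "rep l < n" "level (rep l) = Suc l"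
    by auto
  show "z < n \<Longrightarrow> level z = Suc l \<Longrightarrow> z \<le> rep l"
    unfolding rep_def by (intro Max_ge) auto
qed

lemma profile_rep_level: "z < n \<Longrightarrow> profile z = profile (rep (level z - 1))"
  using rep_greatest[of "level z - 1"] level_pos[of z] level_le_Suc_k[of z]
  by (simp add: profile_eq_iff_level)

lemma lexless_factor_rep_iff:
  assumes "l \<le> k" "l' \<le> k"
  shows "lexless (factor (rep l')) (factor (rep l)) \<longleftrightarrow> l' < l"
proof -
  have less: "lexless (factor (rep a)) (factor (rep b))" if "a < b" "b \<le> k" for a b
  proof (rule lexless_factor)
    have "level (rep a) < level (rep b)"
      using that rep_greatest by simp
    then show "rep b < rep a"
      using level_antimono[of "rep a" "rep b"] by (meson le_less_linear leD)
    show "factor (rep a) \<noteq> factor (rep b)"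
      using \<open>level (rep a) < level (rep b)\<close> that rep_greatest profile_eq_iff_level[of "rep a" "rep b"]
      by auto
    show "rep a < n"
      using that rep_greatest by simp
  qed
  show ?thesis
    using less[of l' l] less[of l l'] assms lexless_asym[of "factor (rep l)" "factor (rep l')"]
    by (cases l' l rule: linorder_cases) (auto simp: lexless_def)
qed

end

locale rotation_coded_word = partitioned_rotation +
  fixes c :: nat and w :: "letter list"
  assumes c_less_n: "c < n" and w_eq: "w = rotation_word n p c 0 n"
begin

lemma length_w: "length w = n"
  by (simp add: w_eq)

lemma occ_A_w: "occ A w = p"
  using occ_A_rotation_word[OF p_less_n, of 0 n c] c_less_n by (simp add: w_eq)

lemma residues_eq: "residues w P = cut_residues"
  by (simp add: residues_def cut_residues_def occ_A_w length_w length_P)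

lemma rseq_eq: "rseq w P = thresholds"
  by (simp add: rseq_def thresholds_def residues_eq length_w)

lemma part_factors_eq: "part_factors w P = image_mset factor (mset_set {..<n})"
proof -
  let ?\<sigma> = "\<lambda>i. (c + i * p) mod n"
  have "n > 0"
    using p_less_n by simp
  then have "take m (rotate i w) = factor (?\<sigma> i)" for i
    using m_less_n take_drop_rotation_word[of 0 0 m n n p]
    by (simp add: w_eq rotate_rotation_word factor_def)
  then have "part_factors w P = image_mset factor (image_mset ?\<sigma> (mset_set {..<n}))"
    by (simp add: part_factors_def circ_factors_def sum_P length_w atLeast0LessThan
        multiset.map_comp comp_def)
  also have "image_mset ?\<sigma> (mset_set {..<n}) = mset_set {..<n}"
    using inj_on_rotation[OF coprime_p_n] \<open>n > 0\<close>
    by (simp add: image_mset_mset_set endo_inj_surj image_subsetI)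
  finally show ?thesis .
qed

lemma multiplicity_eq: "multiplicity w P h = card {z. z < n \<and> profile z = h}"
  by (simp add: multiplicity_def part_factors_eq filter_mset_image_mset lessThan_def)

lemma varieties_eq: "varieties w P = profile ` {..<n}"
  by (simp add: varieties_def part_factors_eq image_image)

lemma variety_elems_eq: "variety_elems w P h = factor ` {z. z < n \<and> profile z = h}"
  by (auto simp: variety_elems_def part_factors_eq)

lemma variety_min_rep: "l \<le> k \<Longrightarrow> variety_min w P (profile (rep l)) = factor (rep l)"
proof (rule variety_min_eqI)
  assume l: "l \<le> k"
  then have elems: "variety_elems w P (profile (rep l)) = factor ` {z. z < n \<and> level z = Suc l}"
    using rep_greatest[OF l] by (auto simp: variety_elems_eq profile_eq_iff_level)
  with l show "factor (rep l) \<in> variety_elems w P (profile (rep l))"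
    using rep_greatest by auto
  show "\<forall>v \<in> variety_elems w P (profile (rep l)). v \<noteq> factor (rep l) \<longrightarrow> lexless (factor (rep l)) v"
  proof (intro ballI impI)
    fix v
    assume "v \<in> variety_elems w P (profile (rep l))" "v \<noteq> factor (rep l)"
    then obtain z where "z < n" "level z = Suc l" "v = factor z" "factor z \<noteq> factor (rep l)"
      unfolding elems by auto
    moreover from this have "z < rep l"
      using rep_greatest[OF l] le_neq_implies_less by blast
    ultimately show "lexless (factor (rep l)) v"
      using rep_greatest[OF l] lexless_factor by simp
  qed
qed

lemma varieties_eq_reps: "varieties w P = (\<lambda>l. profile (rep l)) ` {..k}"
proof -
  have "profile z \<in> (\<lambda>l. profile (rep l)) ` {..k}" if "z < n" for z
    using profile_rep_level[OF that] level_le_Suc_k[of z] by (intro image_eqI[of _ _ "level z - 1"]) auto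
  then have "profile ` {..<n} \<subseteq> (\<lambda>l. profile (rep l)) ` {..k}"
    by auto
  moreover have "(\<lambda>l. profile (rep l)) ` {..k} \<subseteq> profile ` {..<n}"
    using rep_greatest by auto
  ultimately show ?thesis
    by (simp add: varieties_eq)
qed

lemma variety_rank_rep:
  assumes "l \<le> k"
  shows "variety_rank w P (profile (rep l)) = l"
proof -
  have "inj_on (\<lambda>l. profile (rep l)) {..<l}"
    using rep_greatest assms by (intro inj_onI) (simp add: profile_eq_iff_level)
  moreover have "{h \<in> varieties w P. lexless (variety_min w P h) (variety_min w P (profile (rep l)))}
      = (\<lambda>l. profile (rep l)) ` {..<l}"
    using assms by (auto simp: varieties_eq_reps variety_min_rep lexless_factor_rep_iff)
  ultimately show ?thesis
    by (simp add: variety_rank_def card_image)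
qed

lemma multiplicity_rep:
  assumes "l \<le> k"
  shows "multiplicity w P (profile (rep l)) = pi_part w P l"
proof -
  have "{z. z < n \<and> profile z = profile (rep l)} = {z. z < n \<and> level z = Suc l}"
    using rep_greatest[OF assms] profile_eq_iff_level by auto
  then have "multiplicity w P (profile (rep l)) = card {z. z < n \<and> level z = Suc l}"
    by (simp add: multiplicity_eq)
  also have "\<dots> = pi_part w P l"
    using assms by (simp add: card_level_eq pi_part_def rseq_eq)
  finally show ?thesis .
qed

end

theorem mainTheorem3:
  fixes w :: "letter list" and P :: "nat list" and k m :: nat
  assumes "length w > 1"
    and "\<exists>c. christoffel c \<and> conjugate c w"
    and "length P = k" and "\<forall>x \<in> set P. x > 0" and "sum_list P = m"
    and "1 \<le> k" and "k \<le> m" and "m < length w"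
  shows "card (residues w P) = k + 1 \<and>
         (\<forall>l \<le> k. \<exists>h \<in> varieties w P.
            variety_rank w P h = l \<and> multiplicity w P h = pi_part w P l)"
proof -
  obtain c where "christoffel c" "conjugate c w"
    using assms(2) by blast
  then obtain p x where "p < length w" "coprime p (length w)" "x < length w"
    "w = rotation_word (length w) p x 0 (length w)"
    by (rule conjugate_christoffel_eq_rotation_word)
  then interpret rotation_coded_word "length w" p P k m x w
    using assms by unfold_locales auto
  have "profile (rep l) \<in> varieties w P" if "l \<le> k" for l
    using that by (simp add: varieties_eq_reps)
  then show ?thesis
    using variety_rank_rep multiplicity_rep card_cut_residues by (auto simp: residues_eq)
qed

end
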